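(* Let $G$ be a finite undirected weighted graph on $V=\{1,\dots,n\}$ with symmetric nonnegative weights $w(ij)=w(ji)\ge 0$, degrees $d_i=\sum_{j=1}^n w(ij)$ with $\mathrm{vol}(V)=\sum_i d_i>0$, and a positive vertex measure $\mu_1,\dots,\mu_n>0$. Let $M$ be the normalized modularity matrix $M_{ij}=\frac{1}{\mu_i}\big(w(ij)-\frac{d_id_j}{\mathrm{vol}(V)}\big)$, let $\lambda_1(M)$ be its largest eigenvalue, and let $r_M(x)=\langle x,Mx\rangle_\mu/\|x\|_{2,\mu}^2$ for $x\neq 0$. Assume $\lambda_1(M)>0$. Then: (i) for every $A\subseteq V$, $r_M(\mathbb 1_A-\mathbb 1_{\overline A})=2\,q(A)$; (ii) for every $A\subseteq V$ with $\emptyset\neq A\neq V$, $r_M\big(\mathbb 1_A-\tfrac{\mu(A)}{\mu(V)}\mathbb 1\big)=q_\mu(A)$; (iii) $\max_{x\neq 0,\ \langle x,\mathbb 1\rangle_\mu=0} r_M(x)=\max_{x\neq 0} r_M(x)=\lambda_1(M)$. In this sense $r_M$ is a (linear) relaxation of both $q$ and $q_\mu$.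
   Context: $\langle x,y\rangle_\mu=\sum_i\mu_ix_iy_i$, $\|x\|_{2,\mu}^2=\langle x,x\rangle_\mu$; $M$ is self-adjoint for $\langle\cdot,\cdot\rangle_\mu$, so its eigenvalues are real. $\mathbb 1$ is the all-ones vector, $\mathbb 1_A$ the indicator vector of $A$, $\overline A=V\setminus A$, $\mu(A)=\sum_{i\in A}\mu_i$, $\mathrm{vol}(A)=\sum_{i\in A}d_i$. Modularity of $A$: $Q(A)=\sum_{i,j\in A}w(ij)-\mathrm{vol}(A)^2/\mathrm{vol}(V)$. Modularity set function $q(A)=\frac{2}{\mu(V)}Q(A)$ and normalized modularity $q_\mu(A)=\mu(V)\frac{Q(A)}{\mu(A)\mu(\overline A)}$ (for $\emptyset\ne A\ne V$). *)

theory Defs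
  imports "HOL-Analysis.Analysis"
begin

text \<open>Vertices are the elements of a finite type 'n (standing for V = {1..n}).
  Weights w :: 'n => 'n => real, vertex measure mu :: 'n => real.\<close>

definition deg :: "('n::finite \<Rightarrow> 'n \<Rightarrow> real) \<Rightarrow> 'n \<Rightarrow> real" where
  "deg w i = (\<Sum>j\<in>UNIV. w i j)"

definition vol :: "('n::finite \<Rightarrow> 'n \<Rightarrow> real) \<Rightarrow> 'n set \<Rightarrow> real" where
  "vol w A = (\<Sum>i\<in>A. deg w i)"

definition meas :: "('n::finite \<Rightarrow> real) \<Rightarrow> 'n set \<Rightarrow> real" where
  "meas \<mu> A = (\<Sum>i\<in>A. \<mu> i)"

definition mod_matrix :: "('n::finite \<Rightarrow> 'n \<Rightarrow> real) \<Rightarrow> ('n \<Rightarrow> real) \<Rightarrow> real^'n^'n" where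
  "mod_matrix w \<mu> = (\<chi> i j. (w i j - deg w i * deg w j / vol w UNIV) / \<mu> i)"

definition inner_mu :: "('n::finite \<Rightarrow> real) \<Rightarrow> real^'n \<Rightarrow> real^'n \<Rightarrow> real" where
  "inner_mu \<mu> x y = (\<Sum>i\<in>UNIV. \<mu> i * x$i * y$i)"

definition rayleigh :: "real^'n^'n \<Rightarrow> ('n::finite \<Rightarrow> real) \<Rightarrow> real^'n \<Rightarrow> real" where
  "rayleigh M \<mu> x = inner_mu \<mu> x (M *v x) / inner_mu \<mu> x x"

text \<open>Eigenvalues of a real square matrix (M is mu-self-adjoint, so all its eigenvalues are real).\<close>
definition eigenvalues :: "real^'n^'n \<Rightarrow> real set" where
  "eigenvalues M = {l. \<exists>x. x \<noteq> 0 \<and> M *v x = l *\<^sub>R x}"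

definition largest_eigenvalue :: "real^'n^'n \<Rightarrow> real" where
  "largest_eigenvalue M = Max (eigenvalues M)"

definition indic_vec :: "'n::finite set \<Rightarrow> real^'n" where
  "indic_vec A = (\<chi> i. if i \<in> A then 1 else 0)"

definition modularity :: "('n::finite \<Rightarrow> 'n \<Rightarrow> real) \<Rightarrow> 'n set \<Rightarrow> real" where
  "modularity w A = (\<Sum>i\<in>A. \<Sum>j\<in>A. w i j) - (vol w A)\<^sup>2 / vol w UNIV"

definition modq :: "('n::finite \<Rightarrow> 'n \<Rightarrow> real) \<Rightarrow> ('n \<Rightarrow> real) \<Rightarrow> 'n set \<Rightarrow> real" where
  "modq w \<mu> A = 2 / meas \<mu> UNIV * modularity w A"

definition modq_mu :: "('n::finite \<Rightarrow> 'n \<Rightarrow> real) \<Rightarrow> ('n \<Rightarrow> real) \<Rightarrow> 'n set \<Rightarrow> real" where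
  "modq_mu w \<mu> A = meas \<mu> UNIV * modularity w A / (meas \<mu> A * meas \<mu> (UNIV - A))"

end

theory Submission
  imports Defs
begin

text \<open>The Rayleigh quotient of a matrix that is self-adjoint for \<open>\<langle>\<cdot>,\<cdot>\<rangle>\<^sub>\<mu>\<close> attains its maximum
  on the compact unit sphere; a maximizer is an eigenvector (the first variation vanishes), and
  every eigenvalue is the Rayleigh quotient of its eigenvector, so the maximum is \<open>\<lambda>\<^sub>1(M)\<close>.
  The modularity matrix \<open>B = W - d d\<^sup>T / vol V\<close> has zero row and column sums, so its
  quadratic form is invariant under adding constants; evaluated on indicator vectors it gives
  \<open>Q(A)\<close>, which yields (i) and (ii). The all-ones vector lies in the kernel of \<open>M\<close>, so an
  eigenvector for the positive eigenvalue \<open>\<lambda>\<^sub>1(M)\<close> is \<open>\<mu>\<close>-orthogonal to it and the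
  constrained maximum is \<open>\<lambda>\<^sub>1(M)\<close> as well.\<close>

lemma inner_mu_commute: "inner_mu \<mu> x y = inner_mu \<mu> y x"
  unfolding inner_mu_def by (simp add: mult.commute mult.left_commute)

lemma inner_mu_scaleR_left: "inner_mu \<mu> (c *\<^sub>R x) y = c * inner_mu \<mu> x y"
  unfolding inner_mu_def by (simp add: sum_distrib_left mult.commute mult.left_commute)

lemma inner_mu_scaleR_right: "inner_mu \<mu> x (c *\<^sub>R y) = c * inner_mu \<mu> x y"
  unfolding inner_mu_def by (simp add: sum_distrib_left mult.commute mult.left_commute)

lemma inner_mu_add_left: "inner_mu \<mu> (x + z) y = inner_mu \<mu> x y + inner_mu \<mu> z y"
  unfolding inner_mu_def by (simp add: sum.distrib algebra_simps)

lemma inner_mu_add_right: "inner_mu \<mu> x (y + z) = inner_mu \<mu> x y + inner_mu \<mu> x z"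
  unfolding inner_mu_def by (simp add: sum.distrib algebra_simps)

lemma inner_mu_axis_left: "inner_mu \<mu> (axis i 1) y = \<mu> i * y$i"
proof -
  have "inner_mu \<mu> (axis i 1) y = (\<Sum>j\<in>UNIV. if j = i then \<mu> j * y$j else 0)"
    unfolding inner_mu_def axis_def by (rule sum.cong) auto
  thus ?thesis by simp
qed

lemma inner_mu_self_pos:
  assumes mupos: "\<And>i. \<mu> i > 0" and "x \<noteq> 0"
  shows "inner_mu \<mu> x x > 0"
proof -
  from assms(2) obtain k where k: "x$k \<noteq> 0" by (metis vec_eq_iff zero_index)
  have "inner_mu \<mu> x x = (\<Sum>i\<in>UNIV. \<mu> i * (x$i)\<^sup>2)"
    unfolding inner_mu_def by (simp add: power2_eq_square mult.assoc)
  also have "\<dots> > 0"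
    by (rule sum_pos2[where i=k]) (use mupos k in \<open>auto simp: less_imp_le\<close>)
  finally show ?thesis .
qed

lemma inner_mu_matrix_vector_mult:
  fixes M :: "real^'n::finite^'n"
  shows "inner_mu \<mu> x (M *v y) = (\<Sum>i\<in>UNIV. \<Sum>j\<in>UNIV. \<mu> i * M$i$j * x$i * y$j)"
  unfolding inner_mu_def matrix_vector_mult_def
  by (simp add: sum_distrib_left mult.assoc mult.left_commute)

definition mu_selfadjoint :: "('n::finite \<Rightarrow> real) \<Rightarrow> real^'n^'n \<Rightarrow> bool" where
  "mu_selfadjoint \<mu> M \<longleftrightarrow> (\<forall>i j. \<mu> i * M$i$j = \<mu> j * M$j$i)"

lemma mu_selfadjoint_inner_mu:
  assumes "mu_selfadjoint \<mu> M"
  shows "inner_mu \<mu> x (M *v y) = inner_mu \<mu> y (M *v x)"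
proof -
  have "inner_mu \<mu> x (M *v y) = (\<Sum>i\<in>UNIV. \<Sum>j\<in>UNIV. \<mu> j * M$j$i * x$i * y$j)"
    using assms unfolding inner_mu_matrix_vector_mult mu_selfadjoint_def by simp
  also have "\<dots> = (\<Sum>j\<in>UNIV. \<Sum>i\<in>UNIV. \<mu> j * M$j$i * x$i * y$j)"
    by (rule sum.swap)
  also have "\<dots> = inner_mu \<mu> y (M *v x)"
    unfolding inner_mu_matrix_vector_mult by (simp add: mult.commute mult.left_commute)
  finally show ?thesis .
qed

lemma mu_selfadjoint_eigenvectors_orthogonal:
  assumes "mu_selfadjoint \<mu> M"
    and "M *v x = l *\<^sub>R x" and "M *v y = k *\<^sub>R y" and "l \<noteq> k"
  shows "inner_mu \<mu> x y = 0"
proof -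
  have "k * inner_mu \<mu> x y = l * inner_mu \<mu> x y"
    using mu_selfadjoint_inner_mu[OF assms(1), of x y] inner_mu_commute[of \<mu> x y]
    unfolding assms(2,3) inner_mu_scaleR_right by simp
  thus ?thesis using assms(4) by simp
qed

text \<open>Distinct eigenvalues have \<open>\<mu>\<close>-orthogonal eigenvectors; rescaling coordinates by
  \<open>\<surd>\<mu>\<^sub>i\<close> turns these into Euclidean-orthogonal, hence independent, vectors.\<close>
lemma mu_selfadjoint_finite_eigenvalues:
  fixes M :: "real^'n::finite^'n"
  assumes mupos: "\<And>i. \<mu> i > 0" and sa: "mu_selfadjoint \<mu> M"
  shows "finite (eigenvalues M)"
proof -
  define T :: "real^'n \<Rightarrow> real^'n" where "T x = (\<chi> i. sqrt (\<mu> i) * x$i)" for x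
  have T_inner: "T x \<bullet> T y = inner_mu \<mu> x y" for x y
    unfolding T_def inner_vec_def inner_mu_def
    by (rule sum.cong) (use mupos in \<open>auto simp: algebra_simps less_imp_le\<close>)
  define f where "f l = (SOME x. x \<noteq> 0 \<and> M *v x = l *\<^sub>R x)" for l
  have f: "f l \<noteq> 0 \<and> M *v f l = l *\<^sub>R f l" if "l \<in> eigenvalues M" for l
    unfolding f_def by (rule someI_ex) (use that in \<open>simp add: eigenvalues_def\<close>)
  have T_f_pos: "T (f l) \<bullet> T (f l) > 0" if "l \<in> eigenvalues M" for l
    unfolding T_inner using inner_mu_self_pos[of \<mu>, OF mupos] f[OF that] by blast
  have T_f_orth: "T (f l) \<bullet> T (f k) = 0"
    if "l \<in> eigenvalues M" "k \<in> eigenvalues M" "l \<noteq> k" for l k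
    unfolding T_inner using f[OF that(1)] f[OF that(2)] that(3)
    by (intro mu_selfadjoint_eigenvectors_orthogonal[OF sa]) auto
  have inj: "inj_on (T \<circ> f) (eigenvalues M)"
    by (rule inj_onI) (metis T_f_orth T_f_pos comp_apply less_irrefl)
  have "pairwise orthogonal ((T \<circ> f) ` eigenvalues M)"
    unfolding pairwise_def orthogonal_def using T_f_orth by fastforce
  moreover have "0 \<notin> (T \<circ> f) ` eigenvalues M" using T_f_pos by fastforce
  ultimately have "independent ((T \<circ> f) ` eigenvalues M)"
    by (rule pairwise_orthogonal_independent)
  hence "finite ((T \<circ> f) ` eigenvalues M)" using independent_bound by blast
  thus ?thesis using finite_imageD inj by blast
qed

lemma rayleigh_scaleR:
  assumes "c \<noteq> 0"
  shows "rayleigh M \<mu> (c *\<^sub>R x) = rayleigh M \<mu> x"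
  using assms unfolding rayleigh_def
  by (simp add: matrix_vector_mult_scaleR inner_mu_scaleR_left inner_mu_scaleR_right)

lemma rayleigh_eigenvector:
  assumes mupos: "\<And>i. \<mu> i > 0" and "x \<noteq> 0" and "M *v x = l *\<^sub>R x"
  shows "rayleigh M \<mu> x = l"
  using inner_mu_self_pos[of \<mu>, OF mupos assms(2)]
  unfolding rayleigh_def assms(3) inner_mu_scaleR_right by simp

lemma continuous_on_rayleigh_sphere:
  assumes mupos: "\<And>i. \<mu> i > 0"
  shows "continuous_on (sphere 0 1) (rayleigh M \<mu>)"
  unfolding rayleigh_def
proof (rule continuous_on_divide)
  show "continuous_on (sphere 0 1) (\<lambda>x. inner_mu \<mu> x (M *v x))"
    unfolding inner_mu_def matrix_vector_mult_def by (intro continuous_intros)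
  show "continuous_on (sphere 0 1) (\<lambda>x. inner_mu \<mu> x x)"
    unfolding inner_mu_def by (intro continuous_intros)
  show "\<forall>x\<in>sphere 0 1. inner_mu \<mu> x x \<noteq> 0"
    using inner_mu_self_pos[of \<mu>, OF mupos] by (metis less_irrefl mem_sphere_0 norm_zero zero_neq_one)
qed

lemma rayleigh_attains_max:
  fixes M :: "real^'n::finite^'n"
  assumes mupos: "\<And>i. \<mu> i > 0"
  obtains v where "v \<noteq> 0" "\<And>x. x \<noteq> 0 \<Longrightarrow> rayleigh M \<mu> x \<le> rayleigh M \<mu> v"
proof -
  obtain i :: 'n where True by simp
  have "axis i (1::real) \<in> sphere 0 1" by simp
  then obtain v where v: "v \<in> sphere 0 1"
    and vmax: "\<And>y. y \<in> sphere 0 1 \<Longrightarrow> rayleigh M \<mu> y \<le> rayleigh M \<mu> v"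
    using continuous_attains_sup[OF compact_sphere _ continuous_on_rayleigh_sphere[of \<mu>, OF mupos]]
    by blast
  have "rayleigh M \<mu> x \<le> rayleigh M \<mu> v" if "x \<noteq> 0" for x
    using vmax[of "(1/norm x) *\<^sub>R x"] rayleigh_scaleR[of "1/norm x" M \<mu> x] that by simp
  moreover have "v \<noteq> 0" using v by auto
  ultimately show ?thesis using that by blast
qed

lemma linear_coeff_zero_if_quadratic_nonneg:
  fixes a b :: real
  assumes "\<And>t. 2*t*a + t\<^sup>2*b \<ge> 0" and "b \<ge> 0"
  shows "a = 0"
proof -
  define t where "t = -a/(b+1)"
  have ta: "t*(b+1) = -a" unfolding t_def using assms(2) by simp
  have "(2*t*a + t\<^sup>2*b)*(b+1)\<^sup>2 = 2*a*(t*(b+1))*(b+1) + (t*(b+1))\<^sup>2*b"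
    by (simp add: algebra_simps power2_eq_square)
  also have "\<dots> = -(a\<^sup>2*(b+2))" unfolding ta by (simp add: algebra_simps power2_eq_square)
  finally have "a\<^sup>2*(b+2) \<le> 0" using assms(1)[of t] by (metis neg_0_le_iff_le zero_le_mult_iff zero_le_power2)
  hence "a\<^sup>2 \<le> 0" using assms(2)
    by (metis add_nonneg_pos mult_le_0_iff not_le zero_less_numeral)
  thus ?thesis by simp
qed

text \<open>The quadratic form \<open>P = R\<langle>x,x\<rangle>\<^sub>\<mu> - \<langle>x,Mx\<rangle>\<^sub>\<mu>\<close> is nonnegative and vanishes at \<open>v\<close>, so
  \<open>t \<mapsto> P(v + t e\<^sub>i)\<close> has a minimum at \<open>t = 0\<close> and its linear coefficient
  \<open>\<mu>\<^sub>i (R v\<^sub>i - (Mv)\<^sub>i)\<close> vanishes.\<close>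
lemma rayleigh_maximizer_eigenvector:
  fixes M :: "real^'n::finite^'n"
  assumes mupos: "\<And>i. \<mu> i > 0" and sa: "mu_selfadjoint \<mu> M"
    and "v \<noteq> 0" and vmax: "\<And>x. x \<noteq> 0 \<Longrightarrow> rayleigh M \<mu> x \<le> rayleigh M \<mu> v"
  shows "M *v v = rayleigh M \<mu> v *\<^sub>R v"
proof -
  define R where "R = rayleigh M \<mu> v"
  define P where "P x = R * inner_mu \<mu> x x - inner_mu \<mu> x (M *v x)" for x
  have P_nonneg: "P x \<ge> 0" for x
  proof (cases "x = 0")
    case True thus ?thesis unfolding P_def inner_mu_def by simp
  next
    case False
    with vmax have "inner_mu \<mu> x (M *v x) / inner_mu \<mu> x x \<le> R"
      unfolding R_def rayleigh_def by blast
    thus ?thesis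
      using inner_mu_self_pos[of \<mu>, OF mupos False] unfolding P_def by (simp add: divide_le_eq)
  qed
  have P_v: "P v = 0"
    unfolding P_def R_def rayleigh_def using inner_mu_self_pos[of \<mu>, OF mupos \<open>v \<noteq> 0\<close>] by simp
  have "(M *v v)$i = R * v$i" for i
  proof -
    define y :: "real^'n" where "y = axis i 1"
    define a where "a = R * inner_mu \<mu> y v - inner_mu \<mu> y (M *v v)"
    have expand: "P (v + t *\<^sub>R y) = P v + 2*t*a + t\<^sup>2 * P y" for t
      unfolding P_def a_def
      by (simp add: inner_mu_add_left
          inner_mu_add_right inner_mu_scaleR_left inner_mu_scaleR_right
          mu_selfadjoint_inner_mu[OF sa, of v y] inner_mu_commute[of \<mu> v y]
          algebra_simps power2_eq_square)
    have "a = 0"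
    proof (rule linear_coeff_zero_if_quadratic_nonneg)
      show "0 \<le> 2*t*a + t\<^sup>2 * P y" for t
        using P_nonneg[of "v + t *\<^sub>R y"] expand[of t] P_v by simp
    qed (rule P_nonneg)
    hence "\<mu> i * (R * v$i - (M *v v)$i) = 0"
      unfolding a_def y_def inner_mu_axis_left by (simp add: algebra_simps)
    thus ?thesis using mupos[of i] by simp
  qed
  thus ?thesis unfolding R_def by (simp add: vec_eq_iff)
qed

theorem largest_eigenvalue_rayleigh_max:
  assumes mupos: "\<And>i. \<mu> i > 0" and sa: "mu_selfadjoint \<mu> M"
  obtains v where "v \<noteq> 0" "M *v v = largest_eigenvalue M *\<^sub>R v"
    "\<And>x. x \<noteq> 0 \<Longrightarrow> rayleigh M \<mu> x \<le> largest_eigenvalue M"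
proof -
  obtain v where v0: "v \<noteq> 0" and vmax: "\<And>x. x \<noteq> 0 \<Longrightarrow> rayleigh M \<mu> x \<le> rayleigh M \<mu> v"
    using rayleigh_attains_max[of \<mu>, OF mupos] by blast
  have ev: "M *v v = rayleigh M \<mu> v *\<^sub>R v"
    by (rule rayleigh_maximizer_eigenvector[of \<mu>, OF mupos sa v0 vmax])
  have "largest_eigenvalue M = rayleigh M \<mu> v"
    unfolding largest_eigenvalue_def
  proof (rule Max_eqI[OF mu_selfadjoint_finite_eigenvalues[of \<mu>, OF mupos sa]])
    show "rayleigh M \<mu> v \<in> eigenvalues M"
      unfolding eigenvalues_def using v0 ev by blast
    show "l \<le> rayleigh M \<mu> v" if "l \<in> eigenvalues M" for l
      using that vmax rayleigh_eigenvector[of \<mu>, OF mupos] unfolding eigenvalues_def by blast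
  qed
  thus ?thesis using that v0 ev vmax by simp
qed

definition modularity_matrix :: "('n::finite \<Rightarrow> 'n \<Rightarrow> real) \<Rightarrow> 'n \<Rightarrow> 'n \<Rightarrow> real" where
  "modularity_matrix w i j = w i j - deg w i * deg w j / vol w UNIV"

lemma mult_mod_matrix_entry:
  assumes "\<mu> i \<noteq> 0"
  shows "\<mu> i * mod_matrix w \<mu> $ i $ j = modularity_matrix w i j"
  using assms unfolding mod_matrix_def modularity_matrix_def by simp

lemma modularity_matrix_commute:
  assumes "\<And>i j. w i j = w j i"
  shows "modularity_matrix w i j = modularity_matrix w j i"
  unfolding modularity_matrix_def using assms by (simp add: mult.commute)

lemma modularity_matrix_row_sum:
  assumes "vol w UNIV \<noteq> 0"
  shows "(\<Sum>j\<in>UNIV. modularity_matrix w i j) = 0"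
proof -
  have "(\<Sum>j\<in>UNIV. modularity_matrix w i j)
      = deg w i - deg w i * (\<Sum>j\<in>UNIV. deg w j) / vol w UNIV"
    unfolding modularity_matrix_def
    by (simp add: sum_subtractf deg_def sum_divide_distrib sum_distrib_left)
  also have "\<dots> = 0" using assms unfolding vol_def by simp
  finally show ?thesis .
qed

lemma mu_selfadjoint_mod_matrix:
  assumes "\<And>i j. w i j = w j i" and "\<And>i. \<mu> i > 0"
  shows "mu_selfadjoint \<mu> (mod_matrix w \<mu>)"
  unfolding mu_selfadjoint_def
proof (intro allI)
  fix i j
  have "\<mu> i \<noteq> 0" "\<mu> j \<noteq> 0" using assms(2)[of i] assms(2)[of j] by auto
  thus "\<mu> i * mod_matrix w \<mu> $ i $ j = \<mu> j * mod_matrix w \<mu> $ j $ i"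
    using modularity_matrix_commute[of w i j, OF assms(1)] by (simp add: mult_mod_matrix_entry)
qed

lemma mod_matrix_ones:
  assumes "vol w UNIV \<noteq> 0"
  shows "mod_matrix w \<mu> *v indic_vec UNIV = 0"
  using modularity_matrix_row_sum[OF assms]
  unfolding vec_eq_iff matrix_vector_mult_def indic_vec_def mod_matrix_def modularity_matrix_def
  by (simp add: sum_divide_distrib[symmetric])

lemma inner_mu_mod_matrix:
  assumes "\<And>i. \<mu> i > 0"
  shows "inner_mu \<mu> x (mod_matrix w \<mu> *v x)
       = (\<Sum>i\<in>UNIV. \<Sum>j\<in>UNIV. modularity_matrix w i j * x$i * x$j)"
  unfolding inner_mu_matrix_vector_mult
proof (intro sum.cong refl)
  fix i j
  have "\<mu> i \<noteq> 0" using assms[of i] by simp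
  thus "\<mu> i * mod_matrix w \<mu> $ i $ j * x $ i * x $ j = modularity_matrix w i j * x $ i * x $ j"
    by (simp add: mult_mod_matrix_entry)
qed

lemma bilinear_sum_shift_right:
  fixes B :: "'n::finite \<Rightarrow> 'n \<Rightarrow> real"
  assumes "\<And>i. (\<Sum>j\<in>UNIV. B i j) = 0"
  shows "(\<Sum>i\<in>UNIV. \<Sum>j\<in>UNIV. B i j * y i * (x j + c))
       = (\<Sum>i\<in>UNIV. \<Sum>j\<in>UNIV. B i j * y i * x j)"
proof -
  have "(\<Sum>j\<in>UNIV. B i j * y i * (x j + c))
      = (\<Sum>j\<in>UNIV. B i j * y i * x j) + c * y i * (\<Sum>j\<in>UNIV. B i j)" for i
    by (simp add: algebra_simps sum.distrib sum_distrib_left)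
  thus ?thesis using assms by simp
qed

lemma quadratic_form_affine:
  fixes B :: "'n::finite \<Rightarrow> 'n \<Rightarrow> real"
  assumes row: "\<And>i. (\<Sum>j\<in>UNIV. B i j) = 0" and col: "\<And>j. (\<Sum>i\<in>UNIV. B i j) = 0"
  shows "(\<Sum>i\<in>UNIV. \<Sum>j\<in>UNIV. B i j * (a * x i + c) * (a * x j + c))
       = a\<^sup>2 * (\<Sum>i\<in>UNIV. \<Sum>j\<in>UNIV. B i j * x i * x j)"
proof -
  have "(\<Sum>i\<in>UNIV. \<Sum>j\<in>UNIV. B i j * (a * x i + c) * (a * x j + c))
      = (\<Sum>i\<in>UNIV. \<Sum>j\<in>UNIV. B i j * (a * x i + c) * (a * x j))"
    by (rule bilinear_sum_shift_right[OF row])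
  also have "\<dots> = (\<Sum>j\<in>UNIV. \<Sum>i\<in>UNIV. B i j * (a * x j) * (a * x i + c))"
    by (subst sum.swap) (simp add: mult_ac)
  also have "\<dots> = (\<Sum>j\<in>UNIV. \<Sum>i\<in>UNIV. B i j * (a * x j) * (a * x i))"
    by (rule bilinear_sum_shift_right[of "\<lambda>j i. B i j", OF col])
  also have "\<dots> = a\<^sup>2 * (\<Sum>i\<in>UNIV. \<Sum>j\<in>UNIV. B i j * x i * x j)"
    by (subst sum.swap) (simp add: sum_distrib_left power2_eq_square mult_ac)
  finally show ?thesis .
qed

lemma sum_mult_indic_vec: "(\<Sum>j\<in>UNIV. f j * indic_vec A $ j) = (\<Sum>j\<in>A. (f j :: real))"
proof -
  have "(\<Sum>j\<in>UNIV. f j * indic_vec A $ j) = (\<Sum>j\<in>UNIV. if j \<in> A then f j else 0)"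
    unfolding indic_vec_def by (rule sum.cong) auto
  thus ?thesis by (simp add: sum.If_cases)
qed

lemma modularity_matrix_quadratic_indicator:
  "(\<Sum>i\<in>UNIV. \<Sum>j\<in>UNIV. modularity_matrix w i j * indic_vec A $ i * indic_vec A $ j)
    = modularity w A"
proof -
  have "(\<Sum>i\<in>UNIV. \<Sum>j\<in>UNIV. modularity_matrix w i j * indic_vec A $ i * indic_vec A $ j)
      = (\<Sum>i\<in>UNIV. (\<Sum>j\<in>UNIV. modularity_matrix w i j * indic_vec A $ j) * indic_vec A $ i)"
    by (simp add: sum_distrib_left sum_distrib_right mult_ac)
  also have "\<dots> = (\<Sum>i\<in>A. \<Sum>j\<in>A. modularity_matrix w i j)"
    by (simp add: sum_mult_indic_vec)
  also have "\<dots> = (\<Sum>i\<in>A. \<Sum>j\<in>A. w i j) - (\<Sum>i\<in>A. \<Sum>j\<in>A. deg w i * deg w j) / vol w UNIV"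
    unfolding modularity_matrix_def by (simp add: sum_subtractf sum_divide_distrib)
  also have "(\<Sum>i\<in>A. \<Sum>j\<in>A. deg w i * deg w j) = (vol w A)\<^sup>2"
    unfolding vol_def by (simp add: power2_eq_square sum_product)
  finally show ?thesis unfolding modularity_def .
qed

lemma inner_mu_mod_matrix_affine_indicator:
  assumes sym: "\<And>i j. w i j = w j i" and vol: "vol w UNIV \<noteq> 0" and mupos: "\<And>i. \<mu> i > 0"
    and x: "x = a *\<^sub>R indic_vec A + c *\<^sub>R indic_vec UNIV"
  shows "inner_mu \<mu> x (mod_matrix w \<mu> *v x) = a\<^sup>2 * modularity w A"
proof -
  have "x$i = a * indic_vec A $ i + c" for i
    unfolding x by (simp add: indic_vec_def)
  hence "inner_mu \<mu> x (mod_matrix w \<mu> *v x)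
      = (\<Sum>i\<in>UNIV. \<Sum>j\<in>UNIV. modularity_matrix w i j
           * (a * indic_vec A $ i + c) * (a * indic_vec A $ j + c))"
    by (simp add: inner_mu_mod_matrix[of \<mu>, OF mupos])
  also have "\<dots> = a\<^sup>2 * modularity w A"
    using modularity_matrix_row_sum[OF vol] modularity_matrix_commute[of w, OF sym]
    by (simp add: quadratic_form_affine modularity_matrix_quadratic_indicator)
  finally show ?thesis .
qed

lemma rayleigh_mod_matrix_sign_vector:
  assumes sym: "\<And>i j. w i j = w j i" and vol: "vol w UNIV \<noteq> 0" and mupos: "\<And>i. \<mu> i > 0"
  shows "rayleigh (mod_matrix w \<mu>) \<mu> (indic_vec A - indic_vec (UNIV - A)) = 2 * modq w \<mu> A"
proof -
  define x where "x = indic_vec A - indic_vec (UNIV - A)"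
  have "x = 2 *\<^sub>R indic_vec A + (-1) *\<^sub>R indic_vec UNIV"
    unfolding x_def by (simp add: vec_eq_iff indic_vec_def)
  from inner_mu_mod_matrix_affine_indicator[of w \<mu>, OF sym vol mupos this]
  have "inner_mu \<mu> x (mod_matrix w \<mu> *v x) = 4 * modularity w A" by simp
  moreover have "inner_mu \<mu> x x = meas \<mu> UNIV"
    unfolding inner_mu_def meas_def x_def indic_vec_def by (intro sum.cong) auto
  ultimately show ?thesis
    unfolding x_def[symmetric] rayleigh_def modq_def by simp
qed

lemma inner_mu_centered_indicator:
  assumes "meas \<mu> UNIV \<noteq> 0" and x: "x = indic_vec A - (meas \<mu> A / meas \<mu> UNIV) *\<^sub>R indic_vec UNIV"
  shows "inner_mu \<mu> x x = meas \<mu> A * meas \<mu> (UNIV - A) / meas \<mu> UNIV"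
proof -
  define c where "c = meas \<mu> A / meas \<mu> UNIV"
  have split: "meas \<mu> UNIV = meas \<mu> A + meas \<mu> (UNIV - A)"
    unfolding meas_def using sum.subset_diff[of A UNIV \<mu>] by simp
  have "inner_mu \<mu> x x = (\<Sum>i\<in>A. \<mu> i * (1 - c)\<^sup>2) + (\<Sum>i\<in>UNIV - A. \<mu> i * c\<^sup>2)"
    unfolding inner_mu_def x c_def[symmetric]
    using sum.subset_diff[of A UNIV "\<lambda>i. \<mu> i * (indic_vec A $ i - c)\<^sup>2"]
    by (simp add: indic_vec_def power2_eq_square mult.assoc)
  also have "\<dots> = meas \<mu> A * (1 - c)\<^sup>2 + meas \<mu> (UNIV - A) * c\<^sup>2"
    unfolding meas_def by (simp add: sum_distrib_right)
  also have "\<dots> = meas \<mu> A * meas \<mu> (UNIV - A) / meas \<mu> UNIV"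
  proof -
    define a b where "a = meas \<mu> A" and "b = meas \<mu> (UNIV - A)"
    have ab: "a + b \<noteq> 0" using assms(1) split unfolding a_def b_def by simp
    have "1 - a/(a+b) = b/(a+b)" using ab by (simp add: field_simps)
    moreover have "a * (b/(a+b))\<^sup>2 + b * (a/(a+b))\<^sup>2 = a*b*(a+b) / (a+b)\<^sup>2"
      by (simp add: power_divide add_divide_distrib algebra_simps power2_eq_square)
    ultimately show ?thesis
      using ab unfolding c_def split a_def[symmetric] b_def[symmetric]
      by (simp add: power2_eq_square)
  qed
  finally show ?thesis .
qed

text \<open>Since \<open>x / 0 = 0\<close>, this holds also for \<open>A = {}\<close> and \<open>A = UNIV\<close>.\<close>
lemma rayleigh_mod_matrix_centered_indicator:
  assumes sym: "\<And>i j. w i j = w j i" and vol: "vol w UNIV \<noteq> 0" and mupos: "\<And>i. \<mu> i > 0"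
  shows "rayleigh (mod_matrix w \<mu>) \<mu> (indic_vec A - (meas \<mu> A / meas \<mu> UNIV) *\<^sub>R indic_vec UNIV)
       = modq_mu w \<mu> A"
proof -
  define x where "x = indic_vec A - (meas \<mu> A / meas \<mu> UNIV) *\<^sub>R indic_vec UNIV"
  have "meas \<mu> UNIV > 0"
    unfolding meas_def using mupos by (intro sum_pos) auto
  hence "inner_mu \<mu> x x = meas \<mu> A * meas \<mu> (UNIV - A) / meas \<mu> UNIV"
    by (intro inner_mu_centered_indicator) (simp_all add: x_def)
  moreover have "x = 1 *\<^sub>R indic_vec A + (- (meas \<mu> A / meas \<mu> UNIV)) *\<^sub>R indic_vec UNIV"
    unfolding x_def by simp
  from inner_mu_mod_matrix_affine_indicator[of w \<mu>, OF sym vol mupos this]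
  have "inner_mu \<mu> x (mod_matrix w \<mu> *v x) = modularity w A" by simp
  ultimately show ?thesis
    unfolding x_def[symmetric] rayleigh_def modq_mu_def by simp
qed

lemma mod_matrix_rayleigh_max_orthogonal_ones:
  assumes sym: "\<And>i j. w i j = w j i" and vol: "vol w UNIV \<noteq> 0" and mupos: "\<And>i. \<mu> i > 0"
    and "largest_eigenvalue (mod_matrix w \<mu>) \<noteq> 0"
  obtains v where "v \<noteq> 0" "inner_mu \<mu> v (indic_vec UNIV) = 0"
    "rayleigh (mod_matrix w \<mu>) \<mu> v = largest_eigenvalue (mod_matrix w \<mu>)"
proof -
  have sa: "mu_selfadjoint \<mu> (mod_matrix w \<mu>)"
    by (rule mu_selfadjoint_mod_matrix[OF sym mupos])
  obtain v where v0: "v \<noteq> 0"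
    and ev: "mod_matrix w \<mu> *v v = largest_eigenvalue (mod_matrix w \<mu>) *\<^sub>R v"
    using largest_eigenvalue_rayleigh_max[of \<mu>, OF mupos sa] by blast
  have "mod_matrix w \<mu> *v indic_vec UNIV = 0 *\<^sub>R indic_vec UNIV"
    using mod_matrix_ones[OF vol] by simp
  hence "inner_mu \<mu> v (indic_vec UNIV) = 0"
    using mu_selfadjoint_eigenvectors_orthogonal[OF sa ev] assms(4) by blast
  thus ?thesis
    using that v0 rayleigh_eigenvector[of \<mu>, OF mupos v0 ev] by blast
qed

theorem proposition2p2:
  fixes w :: "'n::finite \<Rightarrow> 'n \<Rightarrow> real" and \<mu> :: "'n \<Rightarrow> real"
  assumes sym: "\<And>i j. w i j = w j i"
    and nonneg: "\<And>i j. w i j \<ge> 0"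
    and volpos: "vol w UNIV > 0"
    and mupos: "\<And>i. \<mu> i > 0"
    and lampos: "largest_eigenvalue (mod_matrix w \<mu>) > 0"
  shows "(\<forall>A. rayleigh (mod_matrix w \<mu>) \<mu> (indic_vec A - indic_vec (UNIV - A))
                = 2 * modq w \<mu> A)
    \<and> (\<forall>A. A \<noteq> {} \<and> A \<noteq> UNIV \<longrightarrow>
          rayleigh (mod_matrix w \<mu>) \<mu> (indic_vec A - (meas \<mu> A / meas \<mu> UNIV) *\<^sub>R indic_vec UNIV)
            = modq_mu w \<mu> A)
    \<and> (\<exists>x. x \<noteq> 0 \<and> inner_mu \<mu> x (indic_vec UNIV) = 0
          \<and> rayleigh (mod_matrix w \<mu>) \<mu> x = largest_eigenvalue (mod_matrix w \<mu>))
    \<and> (\<forall>x. x \<noteq> 0 \<and> inner_mu \<mu> x (indic_vec UNIV) = 0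
          \<longrightarrow> rayleigh (mod_matrix w \<mu>) \<mu> x \<le> largest_eigenvalue (mod_matrix w \<mu>))
    \<and> (\<exists>x. x \<noteq> 0 \<and> rayleigh (mod_matrix w \<mu>) \<mu> x = largest_eigenvalue (mod_matrix w \<mu>))
    \<and> (\<forall>x. x \<noteq> 0 \<longrightarrow> rayleigh (mod_matrix w \<mu>) \<mu> x \<le> largest_eigenvalue (mod_matrix w \<mu>))"
proof -
  let ?M = "mod_matrix w \<mu>"
  have vol: "vol w UNIV \<noteq> 0" using volpos by simp
  obtain v where "v \<noteq> 0" "inner_mu \<mu> v (indic_vec UNIV) = 0"
    "rayleigh ?M \<mu> v = largest_eigenvalue ?M"
    using mod_matrix_rayleigh_max_orthogonal_ones[of w \<mu>, OF sym vol mupos] lampos by auto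
  moreover have "rayleigh ?M \<mu> x \<le> largest_eigenvalue ?M" if "x \<noteq> 0" for x
    using largest_eigenvalue_rayleigh_max[of \<mu> ?M, OF mupos mu_selfadjoint_mod_matrix[OF sym mupos]]
      that by metis
  ultimately show ?thesis
    using rayleigh_mod_matrix_sign_vector[of w \<mu>, OF sym vol mupos]
      rayleigh_mod_matrix_centered_indicator[of w \<mu>, OF sym vol mupos]
    by (intro conjI allI impI exI[of _ v]) auto
qed

end
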